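(* Let $\mathcal{R}$ be a tolerance relation on $X=\{1,\dots,n\}$ with chordal graph $G(\mathcal{R})$, and let $C$ be a maximal clique of $G(\mathcal{R})$. Let $F=\{(x_{ij})\in E(\mathcal{R})\mid x_{ij}=0\text{ unless }i,j\in C\}\subseteq E(\mathcal{R})^d$, equipped with the matrix order inherited from $E(\mathcal{R})^d$. Then the canonical linear identification $F\cong M_{|C|}(\mathbb{C})$, $(x_{ij})\mapsto (x_{ij})_{i,j\in C}$, is a complete order isomorphism (in particular $C^*_{\mathrm{env}}(F)=M_{|C|}(\mathbb{C})$).
   Context: A tolerance relation on $X=\{1,\dots,n\}$ is a reflexive symmetric relation $\mathcal{R}\subseteq X\times X$; its graph $G(\mathcal{R})$ has vertex set $X$ and an edge between distinct $i,j$ iff $(i,j)\in\mathcal{R}$. A graph is chordal if every cycle of length at least 4 has a chord. $E(\mathcal{R})=\{(x_{ij})\in M_n(\mathbb{C})\mid x_{ij}=0\text{ if }(i,j)\notin\mathcal{R}\}$. The dual $E(\mathcal{R})^d$ is identified with $E(\mathcal{R})$ with matrix order $M_m(E(\mathcal{R})^d)_+=\{M\in M_m(E(\mathcal{R}))\mid\exists N\in M_m(E(\mathcal{R})^\perp),\ M+N\in M_{mn}(\mathbb{C})_+\}$, $E(\mathcal{R})^\perp=\{y\in M_n(\mathbb{C})\mid y_{ij}=0\ \forall(i,j)\in\mathcal{R}\}$. *)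

theory Defs
  imports Complex_Main
begin

text \<open>Matrices in M_n(C) are represented as functions nat => nat => complex,
  indexed by {1..n} x {1..n} and zero outside that range.\<close>

type_synonym cmat = "nat \<Rightarrow> nat \<Rightarrow> complex"

definition Mat :: "nat \<Rightarrow> cmat set" where
  "Mat n = {x. \<forall>i j. (i \<notin> {1..n} \<or> j \<notin> {1..n}) \<longrightarrow> x i j = 0}"

definition tolerance :: "nat \<Rightarrow> (nat \<times> nat) set \<Rightarrow> bool" where
  "tolerance n R \<longleftrightarrow> R \<subseteq> {1..n} \<times> {1..n} \<and> refl_on {1..n} R \<and> sym R"

definition adj :: "(nat \<times> nat) set \<Rightarrow> nat \<Rightarrow> nat \<Rightarrow> bool" where
  "adj R a b \<longleftrightarrow> a \<noteq> b \<and> (a, b) \<in> R"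

definition chordal :: "nat \<Rightarrow> (nat \<times> nat) set \<Rightarrow> bool" where
  "chordal n R \<longleftrightarrow>
     (\<forall>vs. distinct vs \<and> length vs \<ge> 4 \<and> set vs \<subseteq> {1..n} \<and>
        (\<forall>i < length vs. adj R (vs ! i) (vs ! ((i + 1) mod length vs)))
      \<longrightarrow> (\<exists>i < length vs. \<exists>j < length vs. i \<noteq> j \<and>
             j \<noteq> (i + 1) mod length vs \<and> i \<noteq> (j + 1) mod length vs \<and>
             adj R (vs ! i) (vs ! j)))"

definition clique :: "nat \<Rightarrow> (nat \<times> nat) set \<Rightarrow> nat set \<Rightarrow> bool" where
  "clique n R C \<longleftrightarrow> C \<subseteq> {1..n} \<and> (\<forall>a\<in>C. \<forall>b\<in>C. a \<noteq> b \<longrightarrow> adj R a b)"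

definition maximal_clique :: "nat \<Rightarrow> (nat \<times> nat) set \<Rightarrow> nat set \<Rightarrow> bool" where
  "maximal_clique n R C \<longleftrightarrow> clique n R C \<and> (\<forall>D. clique n R D \<and> C \<subseteq> D \<longrightarrow> D = C)"

definition E :: "nat \<Rightarrow> (nat \<times> nat) set \<Rightarrow> cmat set" where
  "E n R = {x \<in> Mat n. \<forall>i j. (i, j) \<notin> R \<longrightarrow> x i j = 0}"

definition Eperp :: "nat \<Rightarrow> (nat \<times> nat) set \<Rightarrow> cmat set" where
  "Eperp n R = {y \<in> Mat n. \<forall>i j. (i, j) \<in> R \<longrightarrow> y i j = 0}"

definition psd_on :: "'a set \<Rightarrow> ('a \<Rightarrow> 'a \<Rightarrow> complex) \<Rightarrow> bool" where
  "psd_on I A \<longleftrightarrow> (\<forall>a\<in>I. \<forall>b\<in>I. A b a = cnj (A a b)) \<and>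
     (\<forall>v. Im (\<Sum>a\<in>I. \<Sum>b\<in>I. cnj (v a) * A a b * v b) = 0 \<and>
          0 \<le> Re (\<Sum>a\<in>I. \<Sum>b\<in>I. cnj (v a) * A a b * v b))"

text \<open>An element of M_m(M_n(C)) is an m x m array M of n x n matrices (blocks indexed
  by {1..m}); it is positive iff the associated mn x mn block matrix is psd.\<close>
definition block_psd :: "nat \<Rightarrow> nat \<Rightarrow> (nat \<Rightarrow> nat \<Rightarrow> cmat) \<Rightarrow> bool" where
  "block_psd m n M \<longleftrightarrow> psd_on ({1..m} \<times> {1..n}) (\<lambda>(k, i) (l, j). M k l i j)"

definition add_mat :: "cmat \<Rightarrow> cmat \<Rightarrow> cmat" where
  "add_mat x y = (\<lambda>i j. x i j + y i j)"

definition Ed_pos :: "nat \<Rightarrow> (nat \<times> nat) set \<Rightarrow> nat \<Rightarrow> (nat \<Rightarrow> nat \<Rightarrow> cmat) \<Rightarrow> bool" where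
  "Ed_pos n R m M \<longleftrightarrow> (\<forall>k\<in>{1..m}. \<forall>l\<in>{1..m}. M k l \<in> E n R) \<and>
     (\<exists>N. (\<forall>k\<in>{1..m}. \<forall>l\<in>{1..m}. N k l \<in> Eperp n R) \<and>
          block_psd m n (\<lambda>k l. add_mat (M k l) (N k l)))"

definition Fsub :: "nat \<Rightarrow> (nat \<times> nat) set \<Rightarrow> nat set \<Rightarrow> cmat set" where
  "Fsub n R C = {x \<in> E n R. \<forall>i j. \<not> (i \<in> C \<and> j \<in> C) \<longrightarrow> x i j = 0}"

definition cidx :: "nat set \<Rightarrow> nat \<Rightarrow> nat" where
  "cidx C i = sorted_list_of_set C ! (i - 1)"

definition compress :: "nat set \<Rightarrow> cmat \<Rightarrow> cmat" where
  "compress C x = (\<lambda>i j. if i \<in> {1..card C} \<and> j \<in> {1..card C}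
                         then x (cidx C i) (cidx C j) else 0)"

definition smult_mat :: "complex \<Rightarrow> cmat \<Rightarrow> cmat" where
  "smult_mat c x = (\<lambda>i j. c * x i j)"

end

theory Submission
  imports Defs
begin

text \<open>Let M be a matrix over F. Any N from E(R)^\<perp> vanishes on C \<times> C, since C is a clique
  and R is reflexive; so if M + N is positive semidefinite, so is its compression to the
  rows and columns indexed by C, which is the compression of M. Conversely, if that
  compression is positive semidefinite then so is M itself, being supported on C \<times> C,
  and N = 0 witnesses positivity in E(R)^d.\<close>

lemma psd_on_cong:
  assumes "\<And>a b. a \<in> I \<Longrightarrow> b \<in> I \<Longrightarrow> A a b = B a b"
  shows "psd_on I A \<longleftrightarrow> psd_on I B"
proof -
  have "\<And>v. (\<Sum>a\<in>I. \<Sum>b\<in>I. cnj (v a) * A a b * v b) = (\<Sum>a\<in>I. \<Sum>b\<in>I. cnj (v a) * B a b * v b)"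
    using assms by (intro sum.cong refl) auto
  then show ?thesis
    unfolding psd_on_def using assms by auto
qed

lemma psd_on_quadratic_formD:
  assumes "psd_on I A"
  shows "Im (\<Sum>a\<in>I. \<Sum>b\<in>I. cnj (v a) * A a b * v b) = 0"
    and "0 \<le> Re (\<Sum>a\<in>I. \<Sum>b\<in>I. cnj (v a) * A a b * v b)"
  using assms unfolding psd_on_def by blast+

lemma sum2_mono_neutral:
  assumes "finite I" "J \<subseteq> I"
    and "\<And>a b. a \<in> I \<Longrightarrow> b \<in> I \<Longrightarrow> a \<notin> J \<or> b \<notin> J \<Longrightarrow> f a b = 0"
  shows "(\<Sum>a\<in>I. \<Sum>b\<in>I. f a b) = (\<Sum>a\<in>J. \<Sum>b\<in>J. f a b)"
proof -
  have "(\<Sum>a\<in>I. \<Sum>b\<in>I. f a b) = (\<Sum>(a, b)\<in>I \<times> I. f a b)"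
    by (rule sum.cartesian_product)
  also have "\<dots> = (\<Sum>(a, b)\<in>J \<times> J. f a b)"
    using assms by (intro sum.mono_neutral_right) auto
  also have "\<dots> = (\<Sum>a\<in>J. \<Sum>b\<in>J. f a b)"
    by (rule sum.cartesian_product[symmetric])
  finally show ?thesis .
qed

lemma psd_on_subset:
  assumes "finite I" "J \<subseteq> I" "psd_on I A"
  shows "psd_on J A"
  unfolding psd_on_def
proof (intro conjI allI)
  show "\<forall>a\<in>J. \<forall>b\<in>J. A b a = cnj (A a b)"
    using assms unfolding psd_on_def by blast
next
  fix v :: "_ \<Rightarrow> complex"
  let ?w = "\<lambda>a. if a \<in> J then v a else 0"
  have "(\<Sum>a\<in>I. \<Sum>b\<in>I. cnj (?w a) * A a b * ?w b) = (\<Sum>a\<in>J. \<Sum>b\<in>J. cnj (v a) * A a b * v b)"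
    using sum2_mono_neutral[OF assms(1,2), of "\<lambda>a b. cnj (?w a) * A a b * ?w b"] by simp
  with psd_on_quadratic_formD[OF assms(3), of ?w]
  show "Im (\<Sum>a\<in>J. \<Sum>b\<in>J. cnj (v a) * A a b * v b) = 0"
    and "0 \<le> Re (\<Sum>a\<in>J. \<Sum>b\<in>J. cnj (v a) * A a b * v b)"
    by simp_all
qed

lemma psd_on_zero_extension:
  assumes "finite I" "J \<subseteq> I" "psd_on J A"
    and zero: "\<And>a b. a \<in> I \<Longrightarrow> b \<in> I \<Longrightarrow> a \<notin> J \<or> b \<notin> J \<Longrightarrow> A a b = 0"
  shows "psd_on I A"
  unfolding psd_on_def
proof (intro conjI allI ballI)
  fix a b assume "a \<in> I" "b \<in> I"
  show "A b a = cnj (A a b)"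
  proof (cases "a \<in> J \<and> b \<in> J")
    case True
    then show ?thesis using assms(3) unfolding psd_on_def by blast
  next
    case False
    then show ?thesis using zero[of a b] zero[of b a] \<open>a \<in> I\<close> \<open>b \<in> I\<close> by auto
  qed
next
  fix v :: "_ \<Rightarrow> complex"
  have "(\<Sum>a\<in>I. \<Sum>b\<in>I. cnj (v a) * A a b * v b) = (\<Sum>a\<in>J. \<Sum>b\<in>J. cnj (v a) * A a b * v b)"
    using zero by (intro sum2_mono_neutral[OF assms(1,2)]) simp
  with psd_on_quadratic_formD[OF assms(3), of v]
  show "Im (\<Sum>a\<in>I. \<Sum>b\<in>I. cnj (v a) * A a b * v b) = 0"
    and "0 \<le> Re (\<Sum>a\<in>I. \<Sum>b\<in>I. cnj (v a) * A a b * v b)"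
    by simp_all
qed

lemma sum2_reindex_bij_betw:
  assumes "bij_betw h K J"
  shows "(\<Sum>a\<in>K. \<Sum>b\<in>K. f (h a) (h b)) = (\<Sum>a\<in>J. \<Sum>b\<in>J. f a b)"
proof -
  have "(\<Sum>a\<in>K. \<Sum>b\<in>K. f (h a) (h b)) = (\<Sum>a\<in>K. \<Sum>b\<in>J. f (h a) b)"
    by (intro sum.cong refl sum.reindex_bij_betw[OF assms])
  also have "\<dots> = (\<Sum>a\<in>J. \<Sum>b\<in>J. f a b)"
    by (rule sum.reindex_bij_betw[OF assms, of "\<lambda>a. \<Sum>b\<in>J. f a b"])
  finally show ?thesis .
qed

lemma psd_on_reindex_bij_betw:
  assumes "bij_betw h K J" "psd_on K (\<lambda>a b. A (h a) (h b))"
  shows "psd_on J A"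
  unfolding psd_on_def
proof (intro conjI allI)
  show "\<forall>a\<in>J. \<forall>b\<in>J. A b a = cnj (A a b)"
    using assms unfolding psd_on_def bij_betw_def by auto
next
  fix v :: "_ \<Rightarrow> complex"
  have "(\<Sum>a\<in>K. \<Sum>b\<in>K. cnj (v (h a)) * A (h a) (h b) * v (h b)) = (\<Sum>a\<in>J. \<Sum>b\<in>J. cnj (v a) * A a b * v b)"
    by (rule sum2_reindex_bij_betw[OF assms(1)])
  with psd_on_quadratic_formD[OF assms(2), of "\<lambda>a. v (h a)"]
  show "Im (\<Sum>a\<in>J. \<Sum>b\<in>J. cnj (v a) * A a b * v b) = 0"
    and "0 \<le> Re (\<Sum>a\<in>J. \<Sum>b\<in>J. cnj (v a) * A a b * v b)"
    by simp_all
qed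

lemma psd_on_reindex_bij_betw_iff:
  assumes "bij_betw h K J"
  shows "psd_on K (\<lambda>a b. A (h a) (h b)) \<longleftrightarrow> psd_on J A"
proof
  assume "psd_on J A"
  let ?g = "inv_into K h"
  have "psd_on J (\<lambda>a b. A (h (?g a)) (h (?g b)))"
    using \<open>psd_on J A\<close> assms by (subst psd_on_cong) (auto simp: bij_betw_inv_into_right)
  then show "psd_on K (\<lambda>a b. A (h a) (h b))"
    by (rule psd_on_reindex_bij_betw[OF bij_betw_inv_into[OF assms]])
qed (rule psd_on_reindex_bij_betw[OF assms])

lemma bij_betw_cidx:
  assumes "finite C"
  shows "bij_betw (cidx C) {1..card C} C"
proof -
  have "bij_betw (\<lambda>i. i - 1) {1..card C} {..<card C}"
    by (rule bij_betw_byWitness[where f'="\<lambda>i. i + 1"]) auto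
  moreover have "bij_betw ((!) (sorted_list_of_set C)) {..<card C} C"
    using assms by (intro bij_betw_nth) auto
  ultimately have "bij_betw ((!) (sorted_list_of_set C) \<circ> (\<lambda>i. i - 1)) {1..card C} C"
    by (rule bij_betw_trans)
  then show ?thesis
    unfolding cidx_def comp_def .
qed

lemma compress_add_mat: "compress C (add_mat x y) = add_mat (compress C x) (compress C y)"
  by (auto simp: compress_def add_mat_def fun_eq_iff)

lemma compress_smult_mat: "compress C (smult_mat c x) = smult_mat c (compress C x)"
  by (auto simp: compress_def smult_mat_def fun_eq_iff)

lemma clique_times_subset:
  assumes "tolerance n R" "clique n R C"
  shows "C \<times> C \<subseteq> R"
proof safe
  fix a b assume "a \<in> C" "b \<in> C"
  moreover have "C \<subseteq> {1..n}" "refl_on {1..n} R"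
    using assms unfolding tolerance_def clique_def by blast+
  ultimately show "(a, b) \<in> R"
    using assms(2) unfolding clique_def adj_def refl_on_def by (cases "a = b") auto
qed

lemma bij_betw_compress_Fsub:
  assumes "C \<subseteq> {1..n}" "C \<times> C \<subseteq> R"
  shows "bij_betw (compress C) (Fsub n R C) (Mat (card C))"
proof -
  have cb: "bij_betw (cidx C) {1..card C} C"
    using assms(1) by (intro bij_betw_cidx) (rule finite_subset, auto)
  define g where "g = inv_into {1..card C} (cidx C)"
  have g_cidx: "g (cidx C i) = i" if "i \<in> {1..card C}" for i
    using bij_betw_inv_into_left[OF cb that] unfolding g_def .
  have cidx_g: "cidx C (g a) = a" and g_range: "g a \<in> {1..card C}" if "a \<in> C" for a
    using bij_betw_inv_into_right[OF cb that] bij_betwE[OF bij_betw_inv_into[OF cb]] that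
    unfolding g_def by auto
  have cidx_range: "cidx C i \<in> C" if "i \<in> {1..card C}" for i
    using bij_betwE[OF cb] that by blast
  let ?expand = "\<lambda>z i j. if i \<in> C \<and> j \<in> C then z (g i) (g j) else 0"
  show ?thesis
  proof (rule bij_betw_byWitness[where f' = ?expand])
    show "\<forall>x\<in>Fsub n R C. ?expand (compress C x) = x"
      using g_range by (auto simp: Fsub_def compress_def fun_eq_iff cidx_g)
    show "\<forall>z\<in>Mat (card C). compress C (?expand z) = z"
      by (auto simp: Mat_def compress_def fun_eq_iff g_cidx cidx_range)
    show "compress C ` Fsub n R C \<subseteq> Mat (card C)"
      by (auto simp: compress_def Mat_def)
    show "?expand ` Mat (card C) \<subseteq> Fsub n R C"
      using assms by (auto simp: Fsub_def E_def Mat_def subset_iff)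
  qed
qed

lemma Ed_pos_iff_psd_on_clique:
  assumes "C \<subseteq> {1..n}" "C \<times> C \<subseteq> R"
    and MF: "\<forall>k\<in>{1..m}. \<forall>l\<in>{1..m}. M k l \<in> Fsub n R C"
  shows "Ed_pos n R m M \<longleftrightarrow> psd_on ({1..m} \<times> C) (\<lambda>(k, i) (l, j). M k l i j)"
proof
  assume "Ed_pos n R m M"
  then obtain N where N: "\<forall>k\<in>{1..m}. \<forall>l\<in>{1..m}. N k l \<in> Eperp n R"
    and block: "block_psd m n (\<lambda>k l. add_mat (M k l) (N k l))"
    unfolding Ed_pos_def by blast
  from block have "psd_on ({1..m} \<times> {1..n}) (\<lambda>(k, i) (l, j). add_mat (M k l) (N k l) i j)"
    unfolding block_psd_def .
  then have psd_add: "psd_on ({1..m} \<times> C) (\<lambda>(k, i) (l, j). add_mat (M k l) (N k l) i j)"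
    by (rule psd_on_subset[rotated 2]) (use assms(1) in auto)
  have "N k l i j = 0" if "k \<in> {1..m}" "l \<in> {1..m}" "i \<in> C" "j \<in> C" for k l i j
    using N that assms(2) unfolding Eperp_def by blast
  then have "psd_on ({1..m} \<times> C) (\<lambda>(k, i) (l, j). add_mat (M k l) (N k l) i j)
      \<longleftrightarrow> psd_on ({1..m} \<times> C) (\<lambda>(k, i) (l, j). M k l i j)"
    by (intro psd_on_cong) (auto simp: add_mat_def)
  with psd_add show "psd_on ({1..m} \<times> C) (\<lambda>(k, i) (l, j). M k l i j)"
    by blast
next
  assume psd: "psd_on ({1..m} \<times> C) (\<lambda>(k, i) (l, j). M k l i j)"
  have zero: "(\<lambda>(k, i) (l, j). M k l i j) a b = 0"
    if "a \<in> {1..m} \<times> {1..n}" "b \<in> {1..m} \<times> {1..n}" "a \<notin> {1..m} \<times> C \<or> b \<notin> {1..m} \<times> C"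
    for a b
  proof -
    obtain k i l j where "a = (k, i)" "b = (l, j)"
      by fastforce
    with MF that show ?thesis
      unfolding Fsub_def by auto
  qed
  have "psd_on ({1..m} \<times> {1..n}) (\<lambda>(k, i) (l, j). M k l i j)"
    by (rule psd_on_zero_extension[OF _ _ psd zero]) (use assms(1) in auto)
  then have "block_psd m n (\<lambda>k l. add_mat (M k l) (\<lambda>i j. 0))"
    unfolding block_psd_def add_mat_def by simp
  moreover have "(\<lambda>i j. 0) \<in> Eperp n R"
    unfolding Eperp_def Mat_def by simp
  moreover have "\<forall>k\<in>{1..m}. \<forall>l\<in>{1..m}. M k l \<in> E n R"
    using MF unfolding Fsub_def by blast
  ultimately show "Ed_pos n R m M"
    unfolding Ed_pos_def by (intro conjI exI[of _ "\<lambda>k l i j. 0"]) auto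
qed

lemma block_psd_compress_iff:
  assumes "finite C"
  shows "block_psd m (card C) (\<lambda>k l. compress C (M k l))
    \<longleftrightarrow> psd_on ({1..m} \<times> C) (\<lambda>(k, i) (l, j). M k l i j)"
proof -
  let ?h = "map_prod id (cidx C)"
  have h: "bij_betw ?h ({1..m} \<times> {1..card C}) ({1..m} \<times> C)"
    by (rule bij_betw_map_prod[OF bij_betw_id bij_betw_cidx[OF assms]])
  have "block_psd m (card C) (\<lambda>k l. compress C (M k l))
      \<longleftrightarrow> psd_on ({1..m} \<times> {1..card C}) (\<lambda>a b. (\<lambda>(k, i) (l, j). M k l i j) (?h a) (?h b))"
    unfolding block_psd_def by (rule psd_on_cong) (auto simp: compress_def)
  also have "\<dots> \<longleftrightarrow> psd_on ({1..m} \<times> C) (\<lambda>(k, i) (l, j). M k l i j)"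
    by (rule psd_on_reindex_bij_betw_iff[OF h])
  finally show ?thesis .
qed

theorem mainTheorem7:
  fixes n :: nat and R :: "(nat \<times> nat) set" and C :: "nat set"
  assumes "tolerance n R"
    and "chordal n R"
    and "maximal_clique n R C"
  shows "(\<forall>x\<in>Fsub n R C. \<forall>y\<in>Fsub n R C. \<forall>c::complex.
            compress C (add_mat x y) = add_mat (compress C x) (compress C y) \<and>
            compress C (smult_mat c x) = smult_mat c (compress C x))
       \<and> bij_betw (compress C) (Fsub n R C) (Mat (card C))
       \<and> (\<forall>m M. (\<forall>k\<in>{1..m}. \<forall>l\<in>{1..m}. M k l \<in> Fsub n R C) \<longrightarrow>
            (Ed_pos n R m M \<longleftrightarrow> block_psd m (card C) (\<lambda>k l. compress C (M k l))))"
proof -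
  have clique: "clique n R C"
    using assms(3) unfolding maximal_clique_def by blast
  then have C_sub: "C \<subseteq> {1..n}"
    unfolding clique_def by blast
  then have "finite C"
    by (rule finite_subset) simp
  have C_sq: "C \<times> C \<subseteq> R"
    by (rule clique_times_subset[OF assms(1) clique])
  show ?thesis
    using compress_add_mat compress_smult_mat bij_betw_compress_Fsub[OF C_sub C_sq]
      Ed_pos_iff_psd_on_clique[OF C_sub C_sq] block_psd_compress_iff[OF \<open>finite C\<close>]
    by simp
qed

end
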